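(* Let $S$ be an $\mathcal{SOS}_q(n)$ with the property that, for any $n$-tuple $\mathbf{s}$, at most one of $\mathbf{s}$ and $-\mathbf{s}$ occurs in $S$ (as some $\mathbf{s}_n(i)$). Then $S$ and $-S=(-s_i)$ are s-disjoint.
   Context: For a periodic sequence $S=(s_i)$ over $\mathbb{Z}_q$ write $\mathbf{s}_n(i)=(s_i,\ldots,s_{i+n-1})$; for an $n$-tuple $\mathbf{u}=(u_0,\ldots,u_{n-1})$, $\mathbf{u}^R=(u_{n-1},\ldots,u_0)$ and $-\mathbf{u}=(-u_0,\ldots,-u_{n-1})$. A $q$-ary $n$-window sequence of period $m$ is a periodic sequence with $\mathbf{s}_n(i)=\mathbf{s}_n(j)\Rightarrow i\equiv j\pmod m$. An $\mathcal{SOS}_q(n)$ (special orientable sequence) is an $n$-window sequence with $\mathbf{s}_n(i)\neq\mathbf{s}_n(j)^R$ and $\mathbf{s}_n(i)\neq-\mathbf{s}_n(j)^R$ for all $i,j$. Two $n$-window sequences $S=(s_i)$, $T=(t_i)$ are s-disjoint if for all $i,j$: $\mathbf{s}_n(i)\neq\mathbf{t}_n(j)$, $\mathbf{s}_n(i)\neq\mathbf{t}_n(j)^R$, and $\mathbf{s}_n(i)\neq-\mathbf{t}_n(j)^R$. *)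

theory Defs
  imports Main
begin

text \<open>A periodic sequence over Z_q is modelled as s :: nat => int with values in {0..<q}
  and period m > 0. Tuples are lists; negation is taken modulo q.\<close>

definition win :: "(nat \<Rightarrow> int) \<Rightarrow> nat \<Rightarrow> nat \<Rightarrow> int list" where
  "win s n i = map (\<lambda>k. s (i + k)) [0..<n]"

definition negq :: "int \<Rightarrow> int list \<Rightarrow> int list" where
  "negq q u = map (\<lambda>x. (- x) mod q) u"

definition periodic_seq :: "int \<Rightarrow> nat \<Rightarrow> (nat \<Rightarrow> int) \<Rightarrow> bool" where
  "periodic_seq q m s \<longleftrightarrow> 0 < m \<and> (\<forall>i. s (i + m) = s i) \<and> (\<forall>i. 0 \<le> s i \<and> s i < q)"

definition window_seq :: "int \<Rightarrow> nat \<Rightarrow> nat \<Rightarrow> (nat \<Rightarrow> int) \<Rightarrow> bool" where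
  "window_seq q n m s \<longleftrightarrow> periodic_seq q m s \<and>
     (\<forall>i j. win s n i = win s n j \<longrightarrow> i mod m = j mod m)"

definition SOS :: "int \<Rightarrow> nat \<Rightarrow> nat \<Rightarrow> (nat \<Rightarrow> int) \<Rightarrow> bool" where
  "SOS q n m s \<longleftrightarrow> window_seq q n m s \<and>
     (\<forall>i j. win s n i \<noteq> rev (win s n j) \<and> win s n i \<noteq> negq q (rev (win s n j)))"

definition s_disjoint :: "int \<Rightarrow> nat \<Rightarrow> (nat \<Rightarrow> int) \<Rightarrow> (nat \<Rightarrow> int) \<Rightarrow> bool" where
  "s_disjoint q n s t \<longleftrightarrow> (\<forall>i j. win s n i \<noteq> win t n j \<and> win s n i \<noteq> rev (win t n j)
     \<and> win s n i \<noteq> negq q (rev (win t n j)))"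

end

theory Submission
  imports Defs
begin

text \<open>Negation modulo q is an involution on residues and commutes with taking windows and
  with reversal. Hence the windows of -S are exactly the negated windows of S, and each of the
  three s-disjointness conditions for S and -S translates back into a condition on S alone:
  the first is the hypothesis that no tuple occurs in S together with its negation, the other
  two are the two defining conditions of an SOS.\<close>

lemma neg_mod_neg_mod:
  fixes x q :: int
  assumes "0 \<le> x" "x < q"
  shows "(- ((- x) mod q)) mod q = x"
  using assms by (simp add: mod_minus_eq)

lemma negq_negq:
  assumes "set u \<subseteq> {0..<q}"
  shows "negq q (negq q u) = u"
  using assms by (induction u) (auto simp: negq_def neg_mod_neg_mod)

lemma rev_negq: "rev (negq q u) = negq q (rev u)"
  by (simp add: negq_def rev_map)

lemma win_neg: "win (\<lambda>i. (- s i) mod q) n j = negq q (win s n j)"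
  by (simp add: win_def negq_def)

lemma set_win_periodic_seq:
  assumes "periodic_seq q m s"
  shows "set (win s n i) \<subseteq> {0..<q}"
  using assms by (auto simp: win_def periodic_seq_def)

lemma negq_negq_win:
  assumes "periodic_seq q m s"
  shows "negq q (negq q (win s n i)) = win s n i"
  using negq_negq set_win_periodic_seq[OF assms] by blast

lemma periodic_seq_neg:
  assumes "periodic_seq q m s"
  shows "periodic_seq q m (\<lambda>i. (- s i) mod q)"
proof -
  have "0 < q"
    using assms unfolding periodic_seq_def by (metis le_less_trans)
  then show ?thesis
    using assms by (simp add: periodic_seq_def)
qed

lemma window_seq_neg:
  assumes "window_seq q n m s"
  shows "window_seq q n m (\<lambda>i. (- s i) mod q)"
  unfolding window_seq_def
proof (intro conjI allI impI)
  have per: "periodic_seq q m s"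
    using assms unfolding window_seq_def by blast
  then show "periodic_seq q m (\<lambda>i. (- s i) mod q)"
    by (rule periodic_seq_neg)
  fix i j
  assume "win (\<lambda>i. (- s i) mod q) n i = win (\<lambda>i. (- s i) mod q) n j"
  then have "negq q (negq q (win s n i)) = negq q (negq q (win s n j))"
    by (metis win_neg)
  then have "win s n i = win s n j"
    by (simp only: negq_negq_win[OF per])
  then show "i mod m = j mod m"
    using assms unfolding window_seq_def by blast
qed

lemma s_disjoint_neg:
  assumes sos: "SOS q n m s"
    and no_neg_pair: "\<forall>u. \<not> ((\<exists>i. win s n i = u) \<and> (\<exists>j. win s n j = negq q u))"
  shows "s_disjoint q n s (\<lambda>i. (- s i) mod q)"
  unfolding s_disjoint_def win_neg rev_negq
proof (intro allI conjI)
  fix i j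
  have per: "periodic_seq q m s"
    using sos unfolding SOS_def window_seq_def by blast
  have not_rev: "win s n i \<noteq> rev (win s n k)"
    and not_neg_rev: "win s n i \<noteq> negq q (rev (win s n k))" for k
    using sos unfolding SOS_def by blast+
  show "win s n i \<noteq> negq q (win s n j)"
  proof
    assume "win s n i = negq q (win s n j)"
    then have "negq q (win s n i) = negq q (negq q (win s n j))"
      by (rule arg_cong)
    also have "\<dots> = win s n j"
      by (rule negq_negq_win[OF per])
    finally have "negq q (win s n i) = win s n j" .
    then show False
      using no_neg_pair by metis
  qed
  show "win s n i \<noteq> negq q (rev (win s n j))"
    by (rule not_neg_rev)
  have "negq q (negq q (rev (win s n j))) = rev (win s n j)"
    using set_win_periodic_seq[OF per] by (intro negq_negq) simp
  then show "win s n i \<noteq> negq q (negq q (rev (win s n j)))"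
    using not_rev by simp
qed

theorem theorem3p5:
  fixes q :: int and n m :: nat and s :: "nat \<Rightarrow> int"
  assumes "q \<ge> 2" and "n \<ge> 1"
    and "SOS q n m s"
    and "\<forall>u. \<not> ((\<exists>i. win s n i = u) \<and> (\<exists>j. win s n j = negq q u))"
  shows "window_seq q n m (\<lambda>i. (- s i) mod q) \<and> s_disjoint q n s (\<lambda>i. (- s i) mod q)"
proof
  show "window_seq q n m (\<lambda>i. (- s i) mod q)"
    using assms(3) unfolding SOS_def by (blast intro: window_seq_neg)
  show "s_disjoint q n s (\<lambda>i. (- s i) mod q)"
    using assms(3,4) by (rule s_disjoint_neg)
qed

end
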